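(* Let $p$ be an odd prime and let $R$ be a local nearring whose additive group $R^+$ is isomorphic to the non-abelian group of order $p^3$ and exponent $p$. Then the commutator subgroup $D(R^+)$ of $R^+$ is an ideal of $R$.
   Context: A (left) nearring is a set $R$ with operations $+,\cdot$ such that $(R,+)$ is a group, $(R,\cdot)$ a semigroup, and $x(y+z)=xy+xz$ for all $x,y,z$. A nearring with identity is local if its non-invertible elements form a subgroup of $(R,+)$. An ideal of $R$ is a normal subgroup $I$ of $(R,+)$ such that $xI\subseteq I$ for all $x\in R$ and $(z+x)y-xy\in I$ for all $x,y\in R$, $z\in I$. For the group in question, $D(R^+)$ coincides with the center of $R^+$ and has order $p$. *)

theory Defs
  imports "HOL-Algebra.Algebra"
begin

text \<open>A (left) nearring with identity, represented by a ring record R: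
  carrier R, addition add R (not assumed commutative), multiplication mult R,
  zero R and one R.  (R,+) is a group, (R,*) a monoid (semigroup with identity),
  and left distributivity x(y+z) = xy + xz holds.\<close>
definition nearring_with_one :: "('a, 'm) ring_scheme \<Rightarrow> bool" where
  "nearring_with_one R \<longleftrightarrow>
     group (add_monoid R) \<and> monoid R \<and>
     (\<forall>x\<in>carrier R. \<forall>y\<in>carrier R. \<forall>z\<in>carrier R.
        x \<otimes>\<^bsub>R\<^esub> (y \<oplus>\<^bsub>R\<^esub> z) = (x \<otimes>\<^bsub>R\<^esub> y) \<oplus>\<^bsub>R\<^esub> (x \<otimes>\<^bsub>R\<^esub> z))"

definition local_nearring :: "('a, 'm) ring_scheme \<Rightarrow> bool" where
  "local_nearring R \<longleftrightarrow> nearring_with_one R \<and>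
     subgroup (carrier R - Units R) (add_monoid R)"

definition nr_ideal :: "'a set \<Rightarrow> ('a, 'm) ring_scheme \<Rightarrow> bool" where
  "nr_ideal I R \<longleftrightarrow> normal I (add_monoid R) \<and>
     (\<forall>x\<in>carrier R. \<forall>z\<in>I. x \<otimes>\<^bsub>R\<^esub> z \<in> I) \<and>
     (\<forall>x\<in>carrier R. \<forall>y\<in>carrier R. \<forall>z\<in>I.
        ((z \<oplus>\<^bsub>R\<^esub> x) \<otimes>\<^bsub>R\<^esub> y) \<oplus>\<^bsub>R\<^esub> (\<ominus>\<^bsub>R\<^esub> (x \<otimes>\<^bsub>R\<^esub> y)) \<in> I)"

end

(* Write D for the commutator subgroup of R+ and L for the non-units. As R+ is nonabelian of
   order p^3, D is its centre and has order p; moreover D is contained in L, |L| = p^2, L is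
   abelian, and left multiplication by a non-unit annihilates D. So R = <1> + <e> + D for every
   e in L - D, and the congruence (z + x) y = x y (mod D) for z in D only has to be checked for
   y = e, for one suitably chosen e. If 0 y0 <> 0 for some y0, take e = 0 y0: it is fixed by
   every left multiplication. Otherwise R is zero-symmetric and L L is contained in D, which
   settles non-units x; for a unit x write z + x = x (1 + d) with d in D. Then 1 + d fixes D
   pointwise, so (1 + d)^p = 1, and Fermat's little theorem yields (1 + d) e = e (mod D). *)

theory Submission
  imports Defs "HOL-Number_Theory.Residues"
begin

section \<open>Groups of prime power order\<close>

definition center :: "('a, 'b) monoid_scheme \<Rightarrow> 'a set" where
  "center G = {z \<in> carrier G. \<forall>g\<in>carrier G. g \<otimes>\<^bsub>G\<^esub> z = z \<otimes>\<^bsub>G\<^esub> g}"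

lemma (in group_action) card_fixed_points_cong:
  assumes fin: "finite E" and p: "Factorial_Ring.prime p" and order: "order G = p ^ n"
  shows "card {x \<in> E. orbit G \<phi> x = {x}} mod p = card E mod p"
proof -
  let ?O = "orbits G E \<phi>"
  have finO: "finite ?O"
    unfolding orbits_def using fin by simp
  have "card orb mod p = (if card orb = 1 then 1 else 0)" if orb: "orb \<in> ?O" for orb
  proof -
    obtain x where x: "x \<in> E" and orb: "orb = orbit G \<phi> x"
      using orb unfolding orbits_def by blast
    have "card orb dvd p ^ n"
      using orbit_stabilizer_theorem[OF x] orb order by (metis dvd_triv_left)
    then obtain i where "card orb = p ^ i"
      using divides_primepow_nat[OF p] by auto
    then show ?thesis
      using prime_gt_1_nat[OF p] by (cases i) auto
  qed
  then have "(\<Sum>orb\<in>?O. card orb) mod p = card {orb \<in> ?O. card orb = 1} mod p"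
    using finO by (simp add: mod_sum_eq[symmetric] sum.If_cases Int_def cong: sum.cong)
  also have "{orb \<in> ?O. card orb = 1} = (\<lambda>x. {x}) ` {x \<in> E. orbit G \<phi> x = {x}}"
  proof (intro equalityI subsetI)
    fix orb assume "orb \<in> {orb \<in> ?O. card orb = 1}"
    then obtain x where x: "x \<in> E" and orb: "orb = orbit G \<phi> x" "card orb = 1"
      unfolding orbits_def by auto
    then have "orb = {x}"
      using orbit_refl[OF x] by (metis card_1_singletonE singletonD)
    then show "orb \<in> (\<lambda>x. {x}) ` {x \<in> E. orbit G \<phi> x = {x}}"
      using x orb by auto
  qed (auto simp: orbits_def)
  also have "card \<dots> = card {x \<in> E. orbit G \<phi> x = {x}}"
    by (simp add: card_image)
  also have "(\<Sum>orb\<in>?O. card orb) = card E"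
    unfolding card_eq_sum by (rule disjoint_sum[OF fin])
  finally show ?thesis by simp
qed

context group
begin

lemma center_subgroup: "subgroup (center G) G"
proof (rule subgroupI)
  fix x y assume "x \<in> center G" and "y \<in> center G"
  then have x: "x \<in> carrier G" "\<And>g. g \<in> carrier G \<Longrightarrow> g \<otimes> x = x \<otimes> g"
    and y: "y \<in> carrier G" "\<And>g. g \<in> carrier G \<Longrightarrow> g \<otimes> y = y \<otimes> g"
    by (auto simp: center_def)
  have "g \<otimes> (x \<otimes> y) = (x \<otimes> y) \<otimes> g" if g: "g \<in> carrier G" for g
  proof -
    have "g \<otimes> (x \<otimes> y) = (g \<otimes> x) \<otimes> y" using g x(1) y(1) by (simp add: m_assoc)
    also have "\<dots> = x \<otimes> (g \<otimes> y)" using g x(1) y(1) by (simp add: x(2)[OF g] m_assoc)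
    also have "\<dots> = (x \<otimes> y) \<otimes> g" using g x(1) y(1) by (simp add: y(2)[OF g] m_assoc)
    finally show ?thesis .
  qed
  then show "x \<otimes> y \<in> center G"
    using x(1) y(1) by (simp add: center_def)
  have "g \<otimes> inv x = inv x \<otimes> g" if g: "g \<in> carrier G" for g
  proof -
    have "g \<otimes> inv x = inv x \<otimes> (x \<otimes> g) \<otimes> inv x" using g x(1) by (simp add: m_assoc[symmetric])
    also have "\<dots> = inv x \<otimes> g" using g x(1) by (simp add: x(2)[OF g, symmetric] m_assoc)
    finally show ?thesis .
  qed
  then show "inv x \<in> center G"
    using x(1) by (simp add: center_def)
qed (auto simp: center_def)

lemma center_normal: "center G \<lhd> G"
  unfolding normal_inv_iff
proof (intro conjI ballI center_subgroup)
  fix g h assume g: "g \<in> carrier G" and h: "h \<in> center G"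
  then have "g \<otimes> h \<otimes> inv g = h"
    by (auto simp: center_def m_assoc)
  then show "g \<otimes> h \<otimes> inv g \<in> center G"
    using h by simp
qed

lemma comm_group_iff_center: "comm_group G \<longleftrightarrow> center G = carrier G"
proof
  assume "comm_group G"
  then interpret comm_group G .
  show "center G = carrier G"
    by (auto simp: center_def m_comm)
qed (auto simp: center_def intro: group_comm_groupI)

lemma centralizer_subgroup:
  assumes g: "g \<in> carrier G"
  shows "subgroup {h \<in> carrier G. h \<otimes> g = g \<otimes> h} G"
proof (rule subgroupI)
  fix x y assume "x \<in> {h \<in> carrier G. h \<otimes> g = g \<otimes> h}" "y \<in> {h \<in> carrier G. h \<otimes> g = g \<otimes> h}"
  then have x: "x \<in> carrier G" "x \<otimes> g = g \<otimes> x" and y: "y \<in> carrier G" "y \<otimes> g = g \<otimes> y"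
    by auto
  have "x \<otimes> y \<otimes> g = x \<otimes> (g \<otimes> y)" using x y g by (simp add: m_assoc)
  also have "\<dots> = (g \<otimes> x) \<otimes> y" using x y g by (simp add: m_assoc[symmetric])
  also have "\<dots> = g \<otimes> (x \<otimes> y)" using x y g by (simp add: m_assoc)
  finally show "x \<otimes> y \<in> {h \<in> carrier G. h \<otimes> g = g \<otimes> h}"
    using x y by simp
  have "inv x \<otimes> g = inv x \<otimes> (g \<otimes> x) \<otimes> inv x" using g x by (simp add: m_assoc)
  also have "\<dots> = inv x \<otimes> (x \<otimes> g) \<otimes> inv x" using x(2) by simp
  also have "\<dots> = g \<otimes> inv x" using g x(1) by (simp add: m_assoc[symmetric])
  finally show "inv x \<in> {h \<in> carrier G. h \<otimes> g = g \<otimes> h}"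
    using x by simp
qed (use g in auto)

lemma card_subgroup_prime_power:
  assumes "subgroup H G" "Factorial_Ring.prime p" "order G = p ^ n"
  shows "\<exists>k\<le>n. card H = p ^ k"
  using lagrange[OF assms(1)] assms(2,3) divides_primepow_nat by (metis dvd_triv_right)

lemma finite_carrier_of_order_prime_power:
  assumes "Factorial_Ring.prime p" "order G = p ^ n"
  shows "finite (carrier G)"
proof -
  have "0 < order G"
    using assms prime_gt_0_nat by simp
  then show ?thesis
    using order_gt_0_iff_finite by blast
qed

lemma subgroup_eq_carrier_of_card:
  assumes H: "subgroup H G" and card: "card H = order G" and order: "order G \<noteq> 0"
  shows "H = carrier G"
proof (rule card_subset_eq)
  show "finite (carrier G)"
    using order order_gt_0_iff_finite by (metis gr0I)
qed (use subgroup.subset[OF H] card in \<open>auto simp: order_def\<close>)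

lemma prime_dvd_card_center:
  assumes p: "Factorial_Ring.prime p" and order: "order G = p ^ n" and n: "n \<ge> 1"
  shows "p dvd card (center G)"
proof -
  let ?\<phi> = "\<lambda>g. \<lambda>h \<in> carrier G. g \<otimes> h \<otimes> inv g"
  interpret conj: group_action G "carrier G" ?\<phi>
    by (rule action_by_conjugation)
  have fin: "finite (carrier G)"
    by (rule finite_carrier_of_order_prime_power[OF p order])
  have "orbit G ?\<phi> x = {x} \<longleftrightarrow> x \<in> center G" if x: "x \<in> carrier G" for x
  proof -
    have "orbit G ?\<phi> x = (\<lambda>g. g \<otimes> x \<otimes> inv g) ` carrier G"
      using x by (auto simp: orbit_def)
    moreover have "\<one> \<otimes> x \<otimes> inv \<one> = x"
      using x by simp
    moreover have "g \<otimes> x \<otimes> inv g = x \<longleftrightarrow> g \<otimes> x = x \<otimes> g" if "g \<in> carrier G" for g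
      using x that by (simp add: inv_solve_right')
    ultimately show ?thesis
      using x unfolding center_def by (auto intro!: image_eqI[of x _ \<one>])
  qed
  then have "{x \<in> carrier G. orbit G ?\<phi> x = {x}} = center G"
    using center_subgroup subgroup.subset by blast
  then have "card (center G) mod p = card (carrier G) mod p"
    using conj.card_fixed_points_cong[OF fin p order] by simp
  moreover have "p dvd card (carrier G)"
    using order n by (simp add: order_def dvd_power)
  ultimately show ?thesis
    by (simp add: mod_eq_0_iff_dvd[symmetric])
qed

lemma center_eq_carrier_of_prime_index:
  assumes p: "Factorial_Ring.prime p" and order: "order G = p ^ Suc n" and center: "card (center G) = p ^ n"
  shows "center G = carrier G"
proof (rule ccontr)
  assume "center G \<noteq> carrier G"
  then obtain g where g: "g \<in> carrier G" "g \<notin> center G"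
    using center_subgroup subgroup.subset by blast
  let ?C = "{h \<in> carrier G. h \<otimes> g = g \<otimes> h}"
  have fin: "finite (carrier G)"
    by (rule finite_carrier_of_order_prime_power[OF p order])
  have "center G \<subset> ?C"
    using g by (auto simp: center_def)
  then have "p ^ n < card ?C"
    using center fin by (metis (no_types, lifting) mem_Collect_eq psubset_card_mono rev_finite_subset subsetI)
  moreover obtain k where "k \<le> Suc n" "card ?C = p ^ k"
    using card_subgroup_prime_power[OF centralizer_subgroup[OF g(1)] p order] by blast
  ultimately have "card ?C = card (carrier G)"
    using order prime_gt_1_nat[OF p] by (simp add: order_def le_Suc_eq)
  then have "?C = carrier G"
    using fin by (intro card_subset_eq) auto
  then show False
    using g by (auto simp: center_def)
qed

lemma comm_group_of_order_prime_square:
  assumes p: "Factorial_Ring.prime p" and order: "order G = p ^ 2"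
  shows "comm_group G"
proof -
  obtain k where k: "k \<le> 2" "card (center G) = p ^ k"
    using card_subgroup_prime_power[OF center_subgroup p order] by blast
  moreover have "k \<noteq> 0"
    using prime_dvd_card_center[OF p order] k p by (metis nat_dvd_1_iff_1 not_prime_1 power_0 one_le_numeral)
  ultimately consider "card (center G) = p ^ 1" | "card (center G) = p ^ 2"
    by (metis le_Suc_eq le_zero_eq numeral_2_eq_2 One_nat_def)
  then have "center G = carrier G"
  proof cases
    case 1
    then show ?thesis
      using center_eq_carrier_of_prime_index[OF p, of 1] order by (simp add: numeral_2_eq_2)
  next
    case 2
    then show ?thesis
      using subgroup_eq_carrier_of_card[OF center_subgroup] order p by (simp add: prime_gt_0_nat)
  qed
  then show ?thesis
    using comm_group_iff_center by simp
qed

lemma comm_group_of_derived_eq_singleton: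
  assumes "derived G (carrier G) = {\<one>}"
  shows "comm_group G"
proof (rule group_comm_groupI)
  fix x y assume x: "x \<in> carrier G" and y: "y \<in> carrier G"
  have "x \<otimes> y \<otimes> inv x \<otimes> inv y \<in> derived G (carrier G)"
    using x y unfolding derived_def by (blast intro: generate.incl)
  then have "x \<otimes> y \<otimes> inv x \<otimes> inv y = \<one>"
    using assms by simp
  then show "x \<otimes> y = y \<otimes> x"
    using x y by (simp add: inv_solve_right')
qed

lemma card_center_of_order_prime_cube:
  assumes p: "Factorial_Ring.prime p" and order: "order G = p ^ 3" and nonabelian: "\<not> comm_group G"
  shows "card (center G) = p"
proof -
  obtain k where k: "k \<le> 3" "card (center G) = p ^ k"
    using card_subgroup_prime_power[OF center_subgroup p order] by blast
  have "k \<noteq> 0"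
    using prime_dvd_card_center[OF p order] k p by (metis nat_dvd_1_iff_1 not_prime_1 power_0 one_le_numeral)
  moreover have "k \<noteq> 2"
  proof
    assume "k = 2"
    moreover have "order G = p ^ Suc 2"
      using order by (simp add: numeral_3_eq_3 numeral_2_eq_2)
    ultimately have "center G = carrier G"
      using center_eq_carrier_of_prime_index[OF p] k by blast
    then show False
      using nonabelian comm_group_iff_center by simp
  qed
  moreover have "k \<noteq> 3"
  proof
    assume "k = 3"
    then have "center G = carrier G"
      using subgroup_eq_carrier_of_card[OF center_subgroup] k order p by (simp add: prime_gt_0_nat)
    then show False
      using nonabelian comm_group_iff_center by simp
  qed
  ultimately have "k = 1"
    using k by (simp add: numeral_3_eq_3 le_Suc_eq)
  then show ?thesis
    using k by simp
qed

lemma derived_eq_center_of_order_prime_cube: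
  assumes p: "Factorial_Ring.prime p" and order: "order G = p ^ 3" and nonabelian: "\<not> comm_group G"
  shows "derived G (carrier G) = center G"
proof -
  have card_center: "card (center G) = p"
    by (rule card_center_of_order_prime_cube[OF assms])
  interpret Z: normal "center G" G
    by (rule center_normal)
  have "card (rcosets (center G)) * p = p ^ 2 * p"
    using lagrange[OF center_subgroup] card_center order by (simp add: power3_eq_cube power2_eq_square)
  then have "order (G Mod center G) = p ^ 2"
    using prime_gt_0_nat[OF p] by (simp add: order_def FactGroup_def)
  then have "comm_group (G Mod center G)"
    by (rule group.comm_group_of_order_prime_square[OF Z.factorgroup_is_group p])
  then have sub: "derived G (carrier G) \<subseteq> center G"
    by (rule derived_minimal[OF center_normal])
  have derived: "subgroup (derived G (carrier G)) G"
    by (rule derived_is_subgroup) simp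
  obtain j where j: "j \<le> 3" "card (derived G (carrier G)) = p ^ j"
    using card_subgroup_prime_power[OF derived p order] by blast
  have fin: "finite (center G)"
    using card_center p by (metis card.infinite not_prime_0)
  have "j \<noteq> 0"
  proof
    assume "j = 0"
    then have "derived G (carrier G) = {\<one>}"
      using j subgroup.one_closed[OF derived] by (metis card_1_singletonE power_0 singletonD)
    then show False
      using nonabelian comm_group_of_derived_eq_singleton by blast
  qed
  moreover have "j \<le> 1"
    using card_mono[OF fin sub] j card_center power_le_imp_le_exp[OF prime_gt_1_nat[OF p], of j 1]
    by simp
  ultimately have "card (derived G (carrier G)) = card (center G)"
    using j card_center by (simp add: le_Suc_eq)
  then show ?thesis
    using fin sub card_subset_eq by blast
qed

lemma subgroup_nat_pow_closed:
  assumes "subgroup H G" "h \<in> H"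
  shows "h [^] (n::nat) \<in> H"
  using subgroup_int_pow_closed[OF assms, of "int n"] assms by (simp add: int_pow_int)

lemma nat_pow_mod_exponent:
  assumes x: "x \<in> carrier G" and e: "x [^] (e::nat) = \<one>"
  shows "x [^] (n::nat) = x [^] (n mod e)"
proof -
  have "x [^] n = (x [^] e) [^] (n div e) \<otimes> x [^] (n mod e)"
    using x by (simp add: nat_pow_mult nat_pow_pow)
  then show ?thesis
    using x e by simp
qed

lemma mem_subgroup_of_pow_mem:
  assumes S: "subgroup S G" and x: "x \<in> carrier G" "x [^] p = \<one>" and p: "Factorial_Ring.prime p"
    and k: "\<not> p dvd k" and xk: "x [^] (k::nat) \<in> S"
  shows "x \<in> S"
proof -
  have "coprime k p"
    using prime_imp_coprime[OF p k] by (simp add: coprime_commute)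
  then obtain k' where "(k * k') mod p = 1"
    using cong_solve_coprime_nat prime_gt_1_nat[OF p] unfolding cong_def by fastforce
  then have "(x [^] k) [^] k' = x"
    using nat_pow_mod_exponent[OF x, of "k * k'"] x(1) by (simp add: nat_pow_pow)
  then show ?thesis
    using subgroup_nat_pow_closed[OF S xk, of k'] by simp
qed

lemma pow_mult_subgroup_eq_imp_eq:
  fixes i j :: nat
  assumes S: "subgroup S G" and x: "x \<in> carrier G" "x \<notin> S" "x [^] p = \<one>"
    and p: "Factorial_Ring.prime p"
    and ij: "i \<le> j" "j < p" and s: "s \<in> S" "s' \<in> S" and eq: "x [^] i \<otimes> s = x [^] j \<otimes> s'"
  shows "i = j \<and> s = s'"
proof -
  have sc: "s \<in> carrier G" "s' \<in> carrier G"
    using s subgroup.mem_carrier[OF S] by auto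
  have "x [^] j = x [^] i \<otimes> x [^] (j - i)"
    using x(1) ij by (simp add: nat_pow_mult)
  then have "x [^] i \<otimes> s = x [^] i \<otimes> (x [^] (j - i) \<otimes> s')"
    using eq x(1) sc by (simp add: m_assoc)
  then have s_eq: "s = x [^] (j - i) \<otimes> s'"
    using x(1) sc by simp
  then have "x [^] (j - i) = s \<otimes> inv s'"
    using x(1) sc by (simp add: m_assoc)
  then have "x [^] (j - i) \<in> S"
    using s S by (simp add: subgroup.m_closed subgroup.m_inv_closed)
  moreover have "\<not> p dvd (j - i)" if "i \<noteq> j"
    using that ij by (auto dest: dvd_imp_le)
  ultimately have "i = j"
    using mem_subgroup_of_pow_mem[OF S x(1,3) p] x(2) by blast
  then show ?thesis
    using s_eq x(1) sc by simp
qed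

lemma pow_mult_subgroup_cover:
  assumes S: "subgroup S G" and x: "x \<in> carrier G" "x \<notin> S" "x [^] p = \<one>"
    and p: "Factorial_Ring.prime p"
    and closed: "\<And>i s. i < p \<Longrightarrow> s \<in> S \<Longrightarrow> x [^] i \<otimes> s \<in> T"
    and T: "finite T" "card T = p * card S"
  shows "\<forall>g\<in>T. \<exists>i<p. \<exists>s\<in>S. g = x [^] i \<otimes> s"
proof -
  let ?f = "\<lambda>(i::nat, s). x [^] i \<otimes> s"
  have "inj_on ?f ({..<p} \<times> S)"
    using pow_mult_subgroup_eq_imp_eq[OF S x p]
    by (intro inj_onI) (clarsimp, metis nat_le_linear)
  moreover have S_T: "S \<subseteq> T"
  proof
    fix s assume "s \<in> S"
    then show "s \<in> T"
      using closed[of 0 s] prime_gt_0_nat[OF p] subgroup.mem_carrier[OF S] by auto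
  qed
  ultimately have "card (?f ` ({..<p} \<times> S)) = card T"
    using T finite_subset[OF S_T] by (simp add: card_image card_cartesian_product)
  moreover have "?f ` ({..<p} \<times> S) \<subseteq> T"
    using closed by auto
  ultimately have "?f ` ({..<p} \<times> S) = T"
    using T by (intro card_subset_eq) auto
  then show ?thesis
    by force
qed

end

section \<open>Nearrings\<close>

locale nearring =
  fixes R (structure)
  assumes nearring_with_one: "nearring_with_one R"

sublocale nearring \<subseteq> add: group "add_monoid R"
  rewrites "carrier (add_monoid R) = carrier R"
       and "monoid.mult (add_monoid R) = ring.add R"
       and "monoid.one (add_monoid R) = ring.zero R"
       and "m_inv (add_monoid R) = a_inv R"
proof -
  show "group (add_monoid R)"
    using nearring_with_one unfolding nearring_with_one_def by blast
qed (simp_all add: a_inv_def)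

sublocale nearring \<subseteq> monoid R
  using nearring_with_one unfolding nearring_with_one_def by blast

context nearring
begin

abbreviation nat_mult :: "nat \<Rightarrow> 'a \<Rightarrow> 'a" (infixr \<open>\<cdot>\<^sub>\<nat>\<close> 80) where
  "n \<cdot>\<^sub>\<nat> x \<equiv> x [^]\<^bsub>add_monoid R\<^esub> n"

abbreviation D :: "'a set" where
  "D \<equiv> derived (add_monoid R) (carrier R)"

lemma distrib_left:
  "\<lbrakk>x \<in> carrier R; y \<in> carrier R; z \<in> carrier R\<rbrakk> \<Longrightarrow> x \<otimes> (y \<oplus> z) = x \<otimes> y \<oplus> x \<otimes> z"
  using nearring_with_one unfolding nearring_with_one_def by blast

lemma mult_left_hom: "x \<in> carrier R \<Longrightarrow> group_hom (add_monoid R) (add_monoid R) (\<lambda>y. x \<otimes> y)"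
  unfolding group_hom_def group_hom_axioms_def
  using add.group_axioms distrib_left by (auto simp: hom_def)

lemma r_null [simp]: "x \<in> carrier R \<Longrightarrow> x \<otimes> \<zero> = \<zero>"
  using group_hom.hom_one[OF mult_left_hom] by simp

lemma r_minus: "\<lbrakk>x \<in> carrier R; y \<in> carrier R\<rbrakk> \<Longrightarrow> x \<otimes> (\<ominus> y) = \<ominus> (x \<otimes> y)"
  using group_hom.hom_inv[OF mult_left_hom] by (simp add: a_inv_def)

lemma mult_nat_mult:
  "\<lbrakk>x \<in> carrier R; y \<in> carrier R\<rbrakk> \<Longrightarrow> x \<otimes> (n \<cdot>\<^sub>\<nat> y) = n \<cdot>\<^sub>\<nat> (x \<otimes> y)"
  using group_hom.hom_nat_pow[OF mult_left_hom] by simp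

lemma mult_nat_mult_one_add:
  "\<lbrakk>x \<in> carrier R; w \<in> carrier R\<rbrakk> \<Longrightarrow> x \<otimes> (n \<cdot>\<^sub>\<nat> \<one> \<oplus> w) = n \<cdot>\<^sub>\<nat> x \<oplus> x \<otimes> w"
  by (simp add: distrib_left mult_nat_mult)

lemma derived_closed: "d \<in> D \<Longrightarrow> d \<in> carrier R"
  using add.derived_in_carrier[of "carrier R"] by blast

lemma derived_normal: "D \<lhd> add_monoid R"
  using add.derived_self_is_normal by simp

lemma derived_subgroup: "subgroup D (add_monoid R)"
  using add.derived_is_subgroup[of "carrier R"] by simp

lemma mult_derived_closed:
  assumes x: "x \<in> carrier R" and d: "d \<in> D"
  shows "x \<otimes> d \<in> D"
proof -
  interpret left: group_hom "add_monoid R" "add_monoid R" "\<lambda>y. x \<otimes> y"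
    by (rule mult_left_hom[OF x])
  have "(\<lambda>y. x \<otimes> y) ` D = derived (add_monoid R) ((\<lambda>y. x \<otimes> y) ` carrier R)"
    using left.derived_img[of "carrier R"] by simp
  also have "\<dots> \<subseteq> D"
    using add.mono_derived[of "(\<lambda>y. x \<otimes> y) ` carrier R" "carrier R"] x by auto
  finally show ?thesis
    using d by blast
qed

lemma mult_derived_eq_zero:
  assumes x: "x \<in> carrier R" and image: "\<And>y. y \<in> carrier R \<Longrightarrow> x \<otimes> y \<in> A"
    and comm: "\<And>a b. \<lbrakk>a \<in> A; b \<in> A\<rbrakk> \<Longrightarrow> a \<oplus> b = b \<oplus> a" and d: "d \<in> D"
  shows "x \<otimes> d = \<zero>"
proof -
  interpret left: group_hom "add_monoid R" "add_monoid R" "\<lambda>y. x \<otimes> y"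
    by (rule mult_left_hom[OF x])
  let ?K = "kernel (add_monoid R) (add_monoid R) (\<lambda>y. x \<otimes> y)"
  have "derived_set (add_monoid R) (carrier R) \<subseteq> ?K"
  proof
    fix h assume "h \<in> derived_set (add_monoid R) (carrier R)"
    then obtain a b where ab: "a \<in> carrier R" "b \<in> carrier R" and h: "h = a \<oplus> b \<oplus> \<ominus> a \<oplus> \<ominus> b"
      by (auto simp: a_inv_def)
    have "x \<otimes> h = x \<otimes> a \<oplus> x \<otimes> b \<oplus> \<ominus> (x \<otimes> a) \<oplus> \<ominus> (x \<otimes> b)"
      using x ab by (simp add: h distrib_left r_minus)
    also have "\<dots> = x \<otimes> b \<oplus> x \<otimes> a \<oplus> \<ominus> (x \<otimes> a) \<oplus> \<ominus> (x \<otimes> b)"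
      using comm image ab by metis
    also have "\<dots> = \<zero>"
      using x ab by (simp add: add.m_assoc)
    finally show "h \<in> ?K"
      using ab h unfolding kernel_def by simp
  qed
  then have "D \<subseteq> ?K"
    unfolding derived_def using add.generate_subgroup_incl[OF _ left.subgroup_kernel] by simp
  then show ?thesis
    using d unfolding kernel_def by auto
qed

definition residue :: "'a \<Rightarrow> 'a set" where
  "residue a = D #>\<^bsub>add_monoid R\<^esub> a"

lemma residue_derived: "d \<in> D \<Longrightarrow> residue d = D"
  unfolding residue_def by (rule add.coset_join2[OF derived_closed derived_subgroup])

lemma residue_eq_iff:
  assumes "a \<in> carrier R" "b \<in> carrier R"
  shows "residue a = residue b \<longleftrightarrow> a \<ominus> b \<in> D"
proof -
  have "residue a = residue b \<longleftrightarrow> a \<in> D #>\<^bsub>add_monoid R\<^esub> b"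
    unfolding residue_def
    using assms add.repr_independence add.repr_independenceD derived_subgroup by metis
  also have "\<dots> \<longleftrightarrow> a \<ominus> b \<in> D"
    using subgroup.rcos_module[OF derived_subgroup add.group_axioms] assms by (simp add: a_minus_def a_inv_def)
  finally show ?thesis .
qed

lemma residue_add:
  assumes "a \<in> carrier R" "a' \<in> carrier R" "b \<in> carrier R" "b' \<in> carrier R"
    and "residue a = residue a'" "residue b = residue b'"
  shows "residue (a \<oplus> b) = residue (a' \<oplus> b')"
proof -
  have "residue (a \<oplus> b) = residue a <#>\<^bsub>add_monoid R\<^esub> residue b"
    using normal.rcos_sum[OF derived_normal, of a b] assms(1,3) unfolding residue_def by simp
  also have "\<dots> = residue (a' \<oplus> b')"
    using normal.rcos_sum[OF derived_normal, of a' b'] assms(2,4-6) unfolding residue_def by simp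
  finally show ?thesis .
qed

lemma residue_nat_mult:
  assumes "a \<in> carrier R" "a' \<in> carrier R" and "residue a = residue a'"
  shows "residue (n \<cdot>\<^sub>\<nat> a) = residue (n \<cdot>\<^sub>\<nat> a')"
proof -
  have "residue (n \<cdot>\<^sub>\<nat> a) = residue a [^]\<^bsub>add_monoid R Mod D\<^esub> n"
    using normal.FactGroup_pow[OF derived_normal, of a n] assms(1) unfolding residue_def by simp
  also have "\<dots> = residue (n \<cdot>\<^sub>\<nat> a')"
    using normal.FactGroup_pow[OF derived_normal, of a' n] assms(2,3) unfolding residue_def by simp
  finally show ?thesis .
qed

lemma residue_mult:
  assumes x: "x \<in> carrier R" and ab: "a \<in> carrier R" "b \<in> carrier R" and "residue a = residue b"
  shows "residue (x \<otimes> a) = residue (x \<otimes> b)"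
proof -
  have "x \<otimes> a \<ominus> x \<otimes> b = x \<otimes> (a \<ominus> b)"
    using x ab by (simp add: a_minus_def distrib_left r_minus)
  then show ?thesis
    using assms mult_derived_closed by (simp add: residue_eq_iff)
qed

lemma residue_add_derived:
  assumes a: "a \<in> carrier R" and d: "d \<in> D"
  shows "residue (a \<oplus> d) = residue a" "residue (d \<oplus> a) = residue a"
proof -
  have "a \<oplus> d \<ominus> a \<in> D"
    using normal.inv_op_closed2[OF derived_normal, of a d] a d by (simp add: a_minus_def a_inv_def)
  moreover have "d \<oplus> a \<ominus> a = d"
    using a derived_closed[OF d] by (simp add: a_minus_def add.m_assoc)
  ultimately show "residue (a \<oplus> d) = residue a" "residue (d \<oplus> a) = residue a"
    using a derived_closed[OF d] d by (simp_all add: residue_eq_iff)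
qed

end

section \<open>Finite local nearrings\<close>

lemma (in monoid) mult_Units_eq_imp_one:
  assumes u: "u \<in> carrier G" and h: "h \<in> Units G" and eq: "u \<otimes> h = h"
  shows "u = \<one>"
proof -
  have "u = (u \<otimes> h) \<otimes> inv h"
    using u h by (simp add: m_assoc Units_closed)
  then show ?thesis
    using eq h by simp
qed

lemma (in monoid) Units_of_r_inv_finite:
  assumes fin: "finite (carrier G)" and x: "x \<in> carrier G" and y: "y \<in> carrier G" and xy: "x \<otimes> y = \<one>"
  shows "x \<in> Units G"
proof -
  have "inj_on (\<lambda>z. y \<otimes> z) (carrier G)"
  proof (rule inj_onI)
    fix a b assume "a \<in> carrier G" "b \<in> carrier G" "y \<otimes> a = y \<otimes> b"
    then have "(x \<otimes> y) \<otimes> a = (x \<otimes> y) \<otimes> b"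
      using x y by (simp add: m_assoc)
    then show "a = b"
      using xy \<open>a \<in> carrier G\<close> \<open>b \<in> carrier G\<close> by simp
  qed
  then have "(\<lambda>z. y \<otimes> z) ` carrier G = carrier G"
    using y by (intro endo_inj_surj[OF fin]) auto
  then obtain c where c: "c \<in> carrier G" "y \<otimes> c = \<one>"
    by (metis (no_types, lifting) imageE one_closed)
  have "x = (x \<otimes> y) \<otimes> c"
    using x y c by (simp add: m_assoc)
  then have "y \<otimes> x = \<one>"
    using xy c by simp
  with x y xy show ?thesis
    unfolding Units_def by fast
qed

locale finite_local_nearring =
  fixes R (structure)
  assumes local_nearring: "local_nearring R"
    and finite_carrier: "finite (carrier R)"

sublocale finite_local_nearring \<subseteq> nearring
  using local_nearring unfolding local_nearring_def by unfold_locales blast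

context finite_local_nearring
begin

abbreviation L :: "'a set" where
  "L \<equiv> carrier R - Units R"

lemma non_units_subgroup: "subgroup L (add_monoid R)"
  using local_nearring unfolding local_nearring_def by blast

lemma zero_non_unit: "\<zero> \<in> L"
  using subgroup.one_closed[OF non_units_subgroup] by simp

lemma non_units_add: "\<lbrakk>a \<in> L; b \<in> L\<rbrakk> \<Longrightarrow> a \<oplus> b \<in> L"
  using subgroup.m_closed[OF non_units_subgroup] by simp

lemma non_units_a_inv: "a \<in> L \<Longrightarrow> \<ominus> a \<in> L"
  using subgroup.m_inv_closed[OF non_units_subgroup] by (simp add: a_inv_def)

lemma non_units_nat_mult: "a \<in> L \<Longrightarrow> n \<cdot>\<^sub>\<nat> a \<in> L"
  using add.subgroup_nat_pow_closed[OF non_units_subgroup] by simp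

lemma non_units_mult:
  assumes x: "x \<in> L" and y: "y \<in> carrier R"
  shows "x \<otimes> y \<in> L"
proof
  show "x \<otimes> y \<in> carrier R"
    using x y by simp
  show "x \<otimes> y \<notin> Units R"
  proof
    assume xy: "x \<otimes> y \<in> Units R"
    have "x \<otimes> (y \<otimes> inv (x \<otimes> y)) = (x \<otimes> y) \<otimes> inv (x \<otimes> y)"
      using x y xy by (intro m_assoc[symmetric]) auto
    also have "\<dots> = \<one>"
      by (rule Units_r_inv[OF xy])
    finally have "x \<in> Units R"
      using x y xy by (intro Units_of_r_inv_finite[OF finite_carrier, of x "y \<otimes> inv (x \<otimes> y)"]) auto
    then show False
      using x by simp
  qed
qed

lemma Units_mult_non_units:
  assumes u: "u \<in> Units R" and x: "x \<in> L"
  shows "u \<otimes> x \<in> L"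
proof -
  have "inv u \<otimes> (u \<otimes> x) = x"
    using u x Units_closed[OF u] by (simp add: m_assoc[symmetric])
  then show ?thesis
    using u x Units_m_closed[of "inv u" "u \<otimes> x"] by auto
qed

lemma Units_add_non_units:
  assumes u: "u \<in> Units R" and l: "l \<in> L"
  shows "u \<oplus> l \<in> Units R"
proof (rule ccontr)
  assume "u \<oplus> l \<notin> Units R"
  then have "u \<oplus> l \<oplus> \<ominus> l \<in> L"
    using u l non_units_add non_units_a_inv by auto
  then show False
    using u l Units_closed[OF u] by (simp add: add.m_assoc)
qed

lemma derived_subset_non_units:
  assumes "D \<noteq> carrier R"
  shows "D \<subseteq> L"
proof
  fix d assume d: "d \<in> D"
  show "d \<in> L"
  proof (rule ccontr)
    assume "d \<notin> L"
    then have unit: "d \<in> Units R"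
      using derived_closed[OF d] by simp
    then have one: "\<one> \<in> D"
      using mult_derived_closed[OF Units_inv_closed[OF unit] d] by simp
    have "carrier R \<subseteq> D"
    proof
      fix x assume "x \<in> carrier R"
      then show "x \<in> D"
        using mult_derived_closed[OF _ one] by (metis r_one)
    qed
    then show False
      using assms derived_closed by blast
  qed
qed

end

section \<open>Local nearrings on the nonabelian group of order \<open>p\<^sup>3\<close> and exponent \<open>p\<close>\<close>

lemma power_prime_mod:
  fixes m p :: nat
  assumes p: "Factorial_Ring.prime p"
  shows "m ^ p mod p = m mod p"
proof (cases "p dvd m")
  case True
  moreover have "p dvd m ^ p"
    using True prime_gt_0_nat[OF p] by (meson dvd_power dvd_trans)
  ultimately show ?thesis
    by (simp add: dvd_imp_mod_0)
next
  case False
  then have "[m * m ^ (p - 1) = m * 1] (mod p)"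
    by (intro cong_scalar_left fermat_theorem[OF p])
  moreover have "m * m ^ (p - 1) = m ^ p"
    using prime_gt_0_nat[OF p] by (simp add: power_eq_if)
  ultimately show ?thesis
    unfolding cong_def by simp
qed

locale nonabelian_p3_local_nearring = finite_local_nearring +
  fixes p :: nat
  assumes prime: "Factorial_Ring.prime p"
    and card_carrier: "card (carrier R) = p ^ 3"
    and nonabelian: "\<not> comm_group (add_monoid R)"
    and exponent: "x \<in> carrier R \<Longrightarrow> p \<cdot>\<^sub>\<nat> x = \<zero>"
begin

lemma order_add_monoid: "order (add_monoid R) = p ^ 3"
  using card_carrier by (simp add: order_def)

lemma derived_eq_center: "D = center (add_monoid R)"
  using add.derived_eq_center_of_order_prime_cube[OF prime order_add_monoid nonabelian] .

lemma card_derived: "card D = p"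
  using add.card_center_of_order_prime_cube[OF prime order_add_monoid nonabelian] derived_eq_center
  by simp

lemma finite_derived: "finite D"
  using card_derived prime by (metis card.infinite not_prime_0)

lemma exists_nonzero_derived: "\<exists>c\<in>D. c \<noteq> \<zero>"
proof -
  have "D \<noteq> {\<zero>}"
    using card_derived prime_gt_1_nat[OF prime] by auto
  then show ?thesis
    using subgroup.one_closed[OF derived_subgroup] by auto
qed

lemma derived_central: "\<lbrakk>d \<in> D; x \<in> carrier R\<rbrakk> \<Longrightarrow> x \<oplus> d = d \<oplus> x"
  using derived_eq_center by (simp add: center_def)

lemma derived_in_non_units: "d \<in> D \<Longrightarrow> d \<in> L"
proof -
  have "p ^ 1 < p ^ 3"
    using prime_gt_1_nat[OF prime] by (intro power_strict_increasing) simp_all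
  then have "D \<noteq> carrier R"
    using card_derived card_carrier by (intro notI) simp
  then show "d \<in> D \<Longrightarrow> d \<in> L"
    using derived_subset_non_units by blast
qed

lemma derived_eq_nat_mults:
  assumes c: "c \<in> D" "c \<noteq> \<zero>" and d: "d \<in> D"
  shows "\<exists>m<p. d = m \<cdot>\<^sub>\<nat> c"
proof -
  have "\<forall>g\<in>D. \<exists>i<p. \<exists>s\<in>{\<zero>}. g = i \<cdot>\<^sub>\<nat> c \<oplus> s"
  proof (rule add.pow_mult_subgroup_cover)
    show "subgroup {\<zero>} (add_monoid R)"
      using add.triv_subgroup by simp
    show "i \<cdot>\<^sub>\<nat> c \<oplus> s \<in> D" if "s \<in> {\<zero>}" for i s
      using that add.subgroup_nat_pow_closed[OF derived_subgroup c(1)] derived_closed[OF c(1)] by auto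
  qed (use c derived_closed[OF c(1)] prime card_derived finite_derived exponent in auto)
  then show ?thesis
    using d derived_closed[OF c(1)] by auto
qed

lemma zero_mult_eq_zero_if_zero_mult_derived:
  assumes derived: "\<And>y. y \<in> carrier R \<Longrightarrow> \<zero> \<otimes> y \<in> D" and y: "y \<in> carrier R"
  shows "\<zero> \<otimes> y = \<zero>"
proof -
  have "\<zero> \<otimes> (\<zero> \<otimes> y) = \<zero>"
  proof (rule mult_derived_eq_zero[OF add.one_closed derived _ derived[OF y]])
    show "a \<oplus> b = b \<oplus> a" if "a \<in> D" "b \<in> D" for a b
      using derived_central[OF that(2) derived_closed[OF that(1)]] .
  qed
  moreover have "\<zero> \<otimes> (\<zero> \<otimes> y) = \<zero> \<otimes> y"
    using y by (simp add: m_assoc[symmetric])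
  ultimately show ?thesis
    by simp
qed

lemma exists_not_nat_mult_one_add_derived: "\<exists>u\<in>carrier R. \<forall>m d. d \<in> D \<longrightarrow> u \<noteq> m \<cdot>\<^sub>\<nat> \<one> \<oplus> d"
proof -
  define S where "S = (\<lambda>(m, d). m \<cdot>\<^sub>\<nat> \<one> \<oplus> d) ` ({..<p} \<times> D)"
  have "card S \<le> p ^ 2"
    using card_image_le[of "{..<p} \<times> D"] finite_derived card_derived
    by (simp add: S_def card_cartesian_product power2_eq_square)
  also have "\<dots> < p ^ 3"
    using prime_gt_1_nat[OF prime] by (intro power_strict_increasing) simp_all
  finally have "card S < card (carrier R)"
    using card_carrier by simp
  moreover have "finite S"
    using finite_derived by (simp add: S_def)
  ultimately have "\<not> carrier R \<subseteq> S"
    using card_mono[of S "carrier R"] by linarith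
  then obtain u where u: "u \<in> carrier R" "u \<notin> S"
    by blast
  have "u \<noteq> m \<cdot>\<^sub>\<nat> \<one> \<oplus> d" if "d \<in> D" for m d
  proof
    assume u_eq: "u = m \<cdot>\<^sub>\<nat> \<one> \<oplus> d"
    have "u = (m mod p) \<cdot>\<^sub>\<nat> \<one> \<oplus> d"
      using u_eq add.nat_pow_mod_exponent[OF one_closed exponent[OF one_closed]] by simp
    then have "u \<in> S"
      using that prime_gt_0_nat[OF prime] unfolding S_def by (intro image_eqI[of _ _ "(m mod p, d)"]) auto
    then show False
      using u by simp
  qed
  then show ?thesis
    using u by blast
qed

lemma non_units_ne_derived: "L \<noteq> D"
proof
  assume L_eq_D: "L = D"
  then have derived: "\<zero> \<otimes> y \<in> D" if "y \<in> carrier R" for y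
    using non_units_mult[OF zero_non_unit that] by simp
  obtain c where c: "c \<in> D" "c \<noteq> \<zero>"
    using exists_nonzero_derived by blast
  obtain u where u: "u \<in> carrier R" "\<And>m d. d \<in> D \<Longrightarrow> u \<noteq> m \<cdot>\<^sub>\<nat> \<one> \<oplus> d"
    using exists_not_nat_mult_one_add_derived by blast
  have "c \<otimes> u \<in> D"
    using non_units_mult[of c u] c(1) u(1) L_eq_D by simp
  then obtain m where m: "c \<otimes> u = m \<cdot>\<^sub>\<nat> c"
    using derived_eq_nat_mults[OF c] by auto
  let ?y = "\<ominus> (m \<cdot>\<^sub>\<nat> \<one>) \<oplus> u"
  have y: "?y \<in> carrier R"
    using u by simp
  have "c \<otimes> ?y = \<ominus> (m \<cdot>\<^sub>\<nat> c) \<oplus> m \<cdot>\<^sub>\<nat> c"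
    using derived_closed[OF c(1)] u m by (simp add: distrib_left r_minus mult_nat_mult)
  then have cy: "c \<otimes> ?y = \<zero>"
    using derived_closed[OF c(1)] by simp
  have "u = m \<cdot>\<^sub>\<nat> \<one> \<oplus> ?y"
    using u by (simp add: add.m_assoc[symmetric])
  then have "?y \<notin> L"
    using u(2) L_eq_D by blast
  then have "?y \<in> Units R"
    using y by simp
  then have "c = (c \<otimes> ?y) \<otimes> inv ?y"
    using derived_closed[OF c(1)] y by (simp add: m_assoc)
  then show False
    using c cy zero_mult_eq_zero_if_zero_mult_derived[OF derived] \<open>?y \<in> Units R\<close> by simp
qed

lemma card_non_units: "card L = p ^ 2"
proof -
  obtain k where k: "k \<le> 3" "card L = p ^ k"
    using add.card_subgroup_prime_power[OF non_units_subgroup prime order_add_monoid] by blast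
  have D_L: "D \<subseteq> L"
    using derived_in_non_units by blast
  have finite_L: "finite L"
    using finite_carrier by simp
  have "p \<le> card L"
    using card_mono[OF finite_L D_L] card_derived by simp
  then have "k \<noteq> 0"
    using k prime_gt_1_nat[OF prime] by (cases k) auto
  moreover have "k \<noteq> 1"
    using card_subset_eq[OF finite_L D_L] card_derived k non_units_ne_derived by auto
  moreover have "k \<noteq> 3"
  proof
    assume "k = 3"
    then have "L = carrier R"
      using card_subset_eq[OF finite_carrier, of L] k card_carrier by auto
    then show False
      using one_closed Units_one_closed by blast
  qed
  ultimately have "k = 2"
    using k by (simp add: numeral_3_eq_3 numeral_2_eq_2 le_Suc_eq)
  then show ?thesis
    using k by simp
qed

lemma non_units_comm:
  assumes "a \<in> L" "b \<in> L"
  shows "a \<oplus> b = b \<oplus> a"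
proof -
  interpret L: group "add_monoid R\<lparr>carrier := L\<rparr>"
    by (rule add.subgroup_imp_group[OF non_units_subgroup])
  have "order (add_monoid R\<lparr>carrier := L\<rparr>) = p ^ 2"
    using card_non_units by (simp add: order_def)
  then interpret L: comm_group "add_monoid R\<lparr>carrier := L\<rparr>"
    by (rule L.comm_group_of_order_prime_square[OF prime])
  show ?thesis
    using L.m_comm assms by simp
qed

lemma non_unit_mult_derived:
  assumes "x \<in> L" "d \<in> D"
  shows "x \<otimes> d = \<zero>"
proof (rule mult_derived_eq_zero[of x L])
  show "x \<otimes> y \<in> L" if "y \<in> carrier R" for y
    using non_units_mult assms(1) that .
  show "a \<oplus> b = b \<oplus> a" if "a \<in> L" "b \<in> L" for a b
    using non_units_comm that .
qed (use assms in auto)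

lemma non_units_decomp:
  assumes e: "e \<in> L" "e \<notin> D" and w: "w \<in> L"
  shows "\<exists>m. \<exists>k\<in>D. w = m \<cdot>\<^sub>\<nat> e \<oplus> k"
proof -
  have "\<forall>g\<in>L. \<exists>i<p. \<exists>k\<in>D. g = i \<cdot>\<^sub>\<nat> e \<oplus> k"
  proof (rule add.pow_mult_subgroup_cover[OF derived_subgroup])
    show "i \<cdot>\<^sub>\<nat> e \<oplus> k \<in> L" if "k \<in> D" for i k
      using that e non_units_add non_units_nat_mult derived_in_non_units by blast
  qed (use e prime card_non_units card_derived finite_carrier exponent in \<open>auto simp: power2_eq_square\<close>)
  then show ?thesis
    using w by blast
qed

lemma carrier_decomp:
  assumes y: "y \<in> carrier R"
  shows "\<exists>a. \<exists>w\<in>L. y = a \<cdot>\<^sub>\<nat> \<one> \<oplus> w"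
proof -
  have "\<forall>g\<in>carrier R. \<exists>i<p. \<exists>w\<in>L. g = i \<cdot>\<^sub>\<nat> \<one> \<oplus> w"
    by (rule add.pow_mult_subgroup_cover[OF non_units_subgroup])
      (use prime card_non_units card_carrier finite_carrier exponent in \<open>auto simp: power3_eq_cube power2_eq_square\<close>)
  then show ?thesis
    using y by blast
qed

lemma one_add_derived_Units: "d \<in> D \<Longrightarrow> \<one> \<oplus> d \<in> Units R"
  using Units_add_non_units[OF Units_one_closed derived_in_non_units] .

lemma fixes_derived_if_fixes_nonzero:
  assumes x: "x \<in> carrier R" and c: "c \<in> D" "c \<noteq> \<zero>" "x \<otimes> c = c" and k: "k \<in> D"
  shows "x \<otimes> k = k"
proof -
  obtain m where "k = m \<cdot>\<^sub>\<nat> c"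
    using derived_eq_nat_mults[OF c(1,2) k] by blast
  then show ?thesis
    using x c(3) derived_closed[OF c(1)] by (simp add: mult_nat_mult)
qed

lemma inj_on_mult_diff_if_no_fixed_point:
  assumes u: "u \<in> carrier R" and no_fix: "\<And>c. \<lbrakk>c \<in> D; u \<otimes> c = c\<rbrakk> \<Longrightarrow> c = \<zero>"
  shows "inj_on (\<lambda>k. u \<otimes> k \<ominus> k) D"
proof (rule inj_onI)
  fix k1 k2 assume k: "k1 \<in> D" "k2 \<in> D" and eq: "u \<otimes> k1 \<ominus> k1 = u \<otimes> k2 \<ominus> k2"
  have kc: "k1 \<in> carrier R" "k2 \<in> carrier R"
    using k derived_closed by auto
  have uk: "u \<otimes> k1 \<in> carrier R" "u \<otimes> k2 \<in> carrier R"
    using u kc by auto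
  have "u \<otimes> (k1 \<ominus> k2) = u \<otimes> k1 \<ominus> u \<otimes> k2"
    using u kc by (simp add: a_minus_def distrib_left r_minus)
  also have "\<dots> = (u \<otimes> k1 \<ominus> k1) \<oplus> k1 \<ominus> u \<otimes> k2"
    using uk kc by (simp add: a_minus_def add.m_assoc)
  also have "\<dots> = (u \<otimes> k2 \<ominus> k2) \<oplus> k1 \<ominus> u \<otimes> k2"
    by (simp only: eq)
  also have "\<dots> = u \<otimes> k2 \<oplus> (\<ominus> k2 \<oplus> k1) \<ominus> u \<otimes> k2"
    using uk kc by (simp add: a_minus_def add.m_assoc)
  also have "\<dots> = (\<ominus> k2 \<oplus> k1) \<oplus> u \<otimes> k2 \<ominus> u \<otimes> k2"
    using derived_central[OF mult_derived_closed[OF u k(2)], of "\<ominus> k2 \<oplus> k1"] kc by simp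
  also have "\<dots> = \<ominus> k2 \<oplus> k1"
    using uk kc by (simp add: a_minus_def add.m_assoc)
  also have "\<dots> = k1 \<ominus> k2"
    using derived_central[OF subgroup.m_inv_closed[OF derived_subgroup k(2)]] kc
    by (simp add: a_minus_def a_inv_def)
  finally have "u \<otimes> (k1 \<ominus> k2) = k1 \<ominus> k2" .
  moreover have "k1 \<ominus> k2 \<in> D"
    using k subgroup.m_closed[OF derived_subgroup] subgroup.m_inv_closed[OF derived_subgroup]
    by (simp add: a_minus_def a_inv_def)
  ultimately have "k1 \<ominus> k2 = \<zero>"
    using no_fix by blast
  then show "k1 = k2"
    using kc by (simp add: a_minus_def add.inv_solve_right')
qed

text \<open>If \<open>1 + d\<close> fixed no nonzero element of \<open>D\<close>, then \<open>k \<mapsto> (1 + d) k - k\<close> would be a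
  bijection of \<open>D\<close>; solving \<open>(1 + d) k - k = -d\<close> gives \<open>(1 + d)(1 + k) = 1 + k\<close>, so \<open>d = 0\<close>.\<close>
lemma one_add_derived_fixes_nonzero:
  assumes d: "d \<in> D"
  shows "\<exists>c\<in>D. c \<noteq> \<zero> \<and> (\<one> \<oplus> d) \<otimes> c = c"
proof (rule ccontr)
  let ?u = "\<one> \<oplus> d"
  let ?t = "\<lambda>k. ?u \<otimes> k \<ominus> k"
  assume no_fix: "\<not> ?thesis"
  have dc: "d \<in> carrier R"
    using derived_closed[OF d] .
  then have u: "?u \<in> carrier R"
    by simp
  have tD: "?t k \<in> D" if "k \<in> D" for k
    using that mult_derived_closed[OF u that] subgroup.m_closed[OF derived_subgroup]
      subgroup.m_inv_closed[OF derived_subgroup]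
    by (simp add: a_minus_def a_inv_def)
  have "inj_on ?t D"
    using inj_on_mult_diff_if_no_fixed_point[OF u] no_fix by blast
  moreover have "?t ` D \<subseteq> D"
    by (rule image_subsetI) (rule tD)
  ultimately have "?t ` D = D"
    using endo_inj_surj[OF finite_derived] by blast
  moreover have "\<ominus> d \<in> D"
    using subgroup.m_inv_closed[OF derived_subgroup d] by (simp add: a_inv_def)
  ultimately have "\<ominus> d \<in> ?t ` D"
    by simp
  then obtain k0 where k0: "k0 \<in> D" "?t k0 = \<ominus> d"
    by (rule imageE) simp
  have k0c: "k0 \<in> carrier R"
    using derived_closed[OF k0(1)] .
  have "?u \<otimes> k0 = \<ominus> d \<oplus> k0"
    using k0(2)[symmetric] u k0c by (simp add: a_minus_def add.m_assoc)
  moreover have "d \<oplus> (\<ominus> d \<oplus> k0) = k0"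
    using dc k0c by (simp add: add.m_assoc[symmetric])
  ultimately have "?u \<otimes> (\<one> \<oplus> k0) = \<one> \<oplus> k0"
    using u dc k0c by (simp add: distrib_left add.m_assoc)
  then have "?u = \<one>"
    using mult_Units_eq_imp_one[OF u one_add_derived_Units[OF k0(1)]] by blast
  then have "d = \<zero>"
    using dc by simp
  moreover obtain c where "c \<in> D" "c \<noteq> \<zero>"
    using exists_nonzero_derived by blast
  ultimately show False
    using no_fix derived_closed by auto
qed

lemma one_add_derived_mult_derived:
  assumes d: "d \<in> D" and k: "k \<in> D"
  shows "(\<one> \<oplus> d) \<otimes> k = k"
proof -
  obtain c where "c \<in> D" "c \<noteq> \<zero>" "(\<one> \<oplus> d) \<otimes> c = c"
    using one_add_derived_fixes_nonzero[OF d] by blast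
  then show ?thesis
    using fixes_derived_if_fixes_nonzero[of "\<one> \<oplus> d" c k] d k derived_closed by simp
qed

lemma one_add_derived_pow:
  assumes d: "d \<in> D"
  shows "(\<one> \<oplus> d) [^] n = \<one> \<oplus> n \<cdot>\<^sub>\<nat> d"
proof (induction n)
  case 0
  then show ?case
    by simp
next
  case (Suc n)
  have dc: "d \<in> carrier R"
    using derived_closed[OF d] .
  have "(\<one> \<oplus> d) [^] Suc n = (\<one> \<oplus> d) \<otimes> (\<one> \<oplus> d) [^] n"
    using dc by (intro nat_pow_Suc2) simp
  also have "\<dots> = (\<one> \<oplus> d) \<otimes> (\<one> \<oplus> n \<cdot>\<^sub>\<nat> d)"
    by (simp only: Suc.IH)
  also have "\<dots> = \<one> \<oplus> d \<oplus> n \<cdot>\<^sub>\<nat> d"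
    using dc one_add_derived_mult_derived[OF d add.subgroup_nat_pow_closed[OF derived_subgroup d]]
    by (simp add: distrib_left)
  also have "\<dots> = \<one> \<oplus> Suc n \<cdot>\<^sub>\<nat> d"
    using dc add.nat_pow_Suc2[OF dc, of n] by (simp add: add.m_assoc)
  finally show ?case .
qed

lemma residue_one_add_derived_mult:
  assumes d: "d \<in> D" and e: "e \<in> L" "e \<notin> D"
  shows "residue ((\<one> \<oplus> d) \<otimes> e) = residue e"
proof -
  let ?u = "\<one> \<oplus> d"
  have u: "?u \<in> carrier R" and ec: "e \<in> carrier R"
    using derived_closed[OF d] e by auto
  obtain m k where k: "k \<in> D" and ue: "?u \<otimes> e = m \<cdot>\<^sub>\<nat> e \<oplus> k"
    using non_units_decomp[OF e Units_mult_non_units[OF one_add_derived_Units[OF d] e(1)]] by blast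
  have ue_residue: "residue (?u \<otimes> e) = residue (m \<cdot>\<^sub>\<nat> e)"
    using residue_add_derived(1)[OF _ k] ec by (simp add: ue)
  have iterate: "residue (?u [^] n \<otimes> e) = residue ((m ^ n) \<cdot>\<^sub>\<nat> e)" for n
  proof (induction n)
    case 0
    then show ?case
      using ec by simp
  next
    case (Suc n)
    have "residue (?u [^] Suc n \<otimes> e) = residue (?u \<otimes> (?u [^] n \<otimes> e))"
      unfolding nat_pow_Suc2[OF u] using u ec by (simp add: m_assoc)
    also have "\<dots> = residue (?u \<otimes> ((m ^ n) \<cdot>\<^sub>\<nat> e))"
      using residue_mult[OF u _ _ Suc.IH] u ec by simp
    also have "\<dots> = residue ((m ^ n) \<cdot>\<^sub>\<nat> (?u \<otimes> e))"
      using u ec by (simp add: mult_nat_mult)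
    also have "\<dots> = residue ((m ^ n) \<cdot>\<^sub>\<nat> (m \<cdot>\<^sub>\<nat> e))"
      using residue_nat_mult[OF _ _ ue_residue] u ec by simp
    also have "\<dots> = residue ((m ^ Suc n) \<cdot>\<^sub>\<nat> e)"
      using ec by (simp add: add.nat_pow_pow mult.commute)
    finally show ?case .
  qed
  have "(m ^ p) \<cdot>\<^sub>\<nat> e = m \<cdot>\<^sub>\<nat> e"
    using add.nat_pow_mod_exponent[OF ec exponent[OF ec]] power_prime_mod[OF prime] by metis
  then have "residue e = residue (m \<cdot>\<^sub>\<nat> e)"
    using iterate[of p] one_add_derived_pow[OF d, of p] exponent[OF derived_closed[OF d]] ec by simp
  then show ?thesis
    using ue_residue by simp
qed

lemma residue_add_derived_Units_mult:
  assumes x: "x \<in> Units R" and z: "z \<in> D" and e: "e \<in> L" "e \<notin> D"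
  shows "residue ((z \<oplus> x) \<otimes> e) = residue (x \<otimes> e)"
proof -
  let ?d = "inv x \<otimes> z"
  have xc: "x \<in> carrier R" and zc: "z \<in> carrier R" and ec: "e \<in> carrier R"
    using x derived_closed[OF z] e by auto
  have d: "?d \<in> D"
    using mult_derived_closed[OF Units_inv_closed[OF x] z] .
  have "x \<otimes> (\<one> \<oplus> ?d) = x \<oplus> z"
    using x xc zc by (simp add: distrib_left m_assoc[symmetric])
  also have "\<dots> = z \<oplus> x"
    using derived_central[OF z xc] .
  finally have "(z \<oplus> x) \<otimes> e = x \<otimes> ((\<one> \<oplus> ?d) \<otimes> e)"
    using xc ec derived_closed[OF d] by (simp flip: m_assoc)
  then show ?thesis
    using residue_mult[OF xc _ ec residue_one_add_derived_mult[OF d e]] ec derived_closed[OF d] by simp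
qed

text \<open>Since \<open>y = a\<cdot>1 + m\<cdot>e + k\<close> with \<open>k \<in> D\<close> and \<open>x k \<in> D\<close>, the product \<open>x y\<close> is determined
  modulo \<open>D\<close> by \<open>x\<close> and \<open>x e\<close>.\<close>
lemma residue_add_derived_mult_of_generator:
  assumes e: "e \<in> L" "e \<notin> D" and z: "z \<in> D"
    and generator: "\<And>x. x \<in> carrier R \<Longrightarrow> residue ((z \<oplus> x) \<otimes> e) = residue (x \<otimes> e)"
    and x: "x \<in> carrier R" and y: "y \<in> carrier R"
  shows "residue ((z \<oplus> x) \<otimes> y) = residue (x \<otimes> y)"
proof -
  have ec: "e \<in> carrier R" and zc: "z \<in> carrier R"
    using e derived_closed[OF z] by auto
  obtain a w where w: "w \<in> L" and y_eq: "y = a \<cdot>\<^sub>\<nat> \<one> \<oplus> w"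
    using carrier_decomp[OF y] by blast
  obtain m k where k: "k \<in> D" and w_eq: "w = m \<cdot>\<^sub>\<nat> e \<oplus> k"
    using non_units_decomp[OF e w] by blast
  have expand: "residue (x' \<otimes> y) = residue (a \<cdot>\<^sub>\<nat> x' \<oplus> m \<cdot>\<^sub>\<nat> (x' \<otimes> e))"
    if x': "x' \<in> carrier R" for x'
  proof -
    have "x' \<otimes> y = a \<cdot>\<^sub>\<nat> x' \<oplus> m \<cdot>\<^sub>\<nat> (x' \<otimes> e) \<oplus> x' \<otimes> k"
      using x' ec derived_closed[OF k]
      by (simp add: y_eq w_eq distrib_left mult_nat_mult add.m_assoc)
    then show ?thesis
      using residue_add_derived(1)[OF _ mult_derived_closed[OF x' k]] x' ec by simp
  qed
  have "residue (z \<oplus> x) = residue x"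
    using residue_add_derived(2)[OF x z] .
  then have "residue (a \<cdot>\<^sub>\<nat> (z \<oplus> x)) = residue (a \<cdot>\<^sub>\<nat> x)"
    using x zc by (intro residue_nat_mult) auto
  moreover have "residue (m \<cdot>\<^sub>\<nat> ((z \<oplus> x) \<otimes> e)) = residue (m \<cdot>\<^sub>\<nat> (x \<otimes> e))"
    using generator[OF x] x zc ec by (intro residue_nat_mult) auto
  ultimately show ?thesis
    using expand[of "z \<oplus> x"] expand[OF x] residue_add x zc ec by simp
qed

lemma absorbing_non_unit:
  assumes y0: "y0 \<in> carrier R" and nonzero: "\<zero> \<otimes> y0 \<noteq> \<zero>"
  shows "\<zero> \<otimes> y0 \<in> L" "\<zero> \<otimes> y0 \<notin> D" "\<And>x. x \<in> carrier R \<Longrightarrow> x \<otimes> (\<zero> \<otimes> y0) = \<zero> \<otimes> y0"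
proof -
  show fixed: "x \<otimes> (\<zero> \<otimes> y0) = \<zero> \<otimes> y0" if "x \<in> carrier R" for x
    using that y0 by (simp add: m_assoc[symmetric])
  show "\<zero> \<otimes> y0 \<in> L"
    using non_units_mult[OF zero_non_unit y0] .
  show "\<zero> \<otimes> y0 \<notin> D"
    using non_unit_mult_derived[OF zero_non_unit] fixed[of \<zero>] nonzero by auto
qed

lemma derived_mult_closed_if_zero_symmetric:
  assumes zero_symmetric: "\<And>y. y \<in> carrier R \<Longrightarrow> \<zero> \<otimes> y = \<zero>"
    and c: "c \<in> D" and y: "y \<in> carrier R"
  shows "c \<otimes> y \<in> D"
proof (rule ccontr)
  let ?w = "c \<otimes> y"
  assume w: "?w \<notin> D"
  have cc: "c \<in> carrier R" and cL: "c \<in> L"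
    using derived_closed[OF c] derived_in_non_units[OF c] .
  have wL: "?w \<in> L"
    using non_units_mult[OF cL y] .
  have "c \<otimes> ?w = (c \<otimes> c) \<otimes> y"
    using cc y by (simp add: m_assoc)
  then have cw: "c \<otimes> ?w = \<zero>"
    using non_unit_mult_derived[OF cL c] zero_symmetric[OF y] by simp
  have cL_zero: "c \<otimes> l = \<zero>" if l: "l \<in> L" for l
  proof -
    obtain m k where k: "k \<in> D" and l_eq: "l = m \<cdot>\<^sub>\<nat> ?w \<oplus> k"
      using non_units_decomp[OF wL w l] by blast
    then show ?thesis
      using cc y cw non_unit_mult_derived[OF cL k] derived_closed[OF k]
      by (simp add: distrib_left mult_nat_mult)
  qed
  obtain a l where l: "l \<in> L" and y_eq: "y = a \<cdot>\<^sub>\<nat> \<one> \<oplus> l"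
    using carrier_decomp[OF y] by blast
  have "?w = a \<cdot>\<^sub>\<nat> c"
    using cc l cL_zero[OF l] by (simp add: y_eq mult_nat_mult_one_add)
  then show False
    using w add.subgroup_nat_pow_closed[OF derived_subgroup c] by simp
qed

lemma non_units_mult_in_derived_if_zero_symmetric:
  assumes zero_symmetric: "\<And>y. y \<in> carrier R \<Longrightarrow> \<zero> \<otimes> y = \<zero>"
    and x: "x \<in> L" and l: "l \<in> L"
  shows "x \<otimes> l \<in> D"
proof (rule ccontr)
  let ?w = "x \<otimes> l"
  assume w: "?w \<notin> D"
  have xc: "x \<in> carrier R" and lc: "l \<in> carrier R"
    using x l by auto
  obtain m k where k: "k \<in> D" and x_eq: "x = m \<cdot>\<^sub>\<nat> ?w \<oplus> k"
    using non_units_decomp[OF non_units_mult[OF x lc] w x] by blast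
  let ?y = "\<one> \<oplus> \<ominus> (m \<cdot>\<^sub>\<nat> l)"
  have y: "?y \<in> Units R"
    using Units_add_non_units[OF Units_one_closed non_units_a_inv[OF non_units_nat_mult[OF l]]] .
  have "x \<otimes> ?y = x \<oplus> \<ominus> (m \<cdot>\<^sub>\<nat> ?w)"
    using xc lc by (simp add: distrib_left r_minus mult_nat_mult)
  also have "\<dots> = k"
    using x_eq derived_central[OF k] derived_closed[OF k] xc lc
    by (metis add.inv_solve_right' add.nat_pow_closed m_closed)
  finally have "x = k \<otimes> inv ?y"
    using xc y by (metis Units_closed Units_inv_closed Units_r_inv m_assoc r_one)
  then have "x \<in> D"
    using derived_mult_closed_if_zero_symmetric[OF zero_symmetric k] y by simp
  then show False
    using w derived_mult_closed_if_zero_symmetric[OF zero_symmetric _ lc] by blast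
qed

lemma residue_add_derived_mult:
  assumes z: "z \<in> D" and x: "x \<in> carrier R" and y: "y \<in> carrier R"
  shows "residue ((z \<oplus> x) \<otimes> y) = residue (x \<otimes> y)"
proof -
  obtain e where e: "e \<in> L" "e \<notin> D"
    and generator: "\<And>x. x \<in> carrier R \<Longrightarrow> residue ((z \<oplus> x) \<otimes> e) = residue (x \<otimes> e)"
  proof (cases "\<forall>y\<in>carrier R. \<zero> \<otimes> y = \<zero>")
    case True
    obtain e where e: "e \<in> L" "e \<notin> D"
      using non_units_ne_derived derived_in_non_units by blast
    have "residue ((z \<oplus> x) \<otimes> e) = residue (x \<otimes> e)" if x: "x \<in> carrier R" for x
    proof (cases "x \<in> Units R")
      case True
      then show ?thesis
        using residue_add_derived_Units_mult[OF _ z e] by blast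
    next
      case False
      then have "x \<in> L" "z \<oplus> x \<in> L"
        using x non_units_add[OF derived_in_non_units[OF z]] by auto
      then have "(z \<oplus> x) \<otimes> e \<in> D" "x \<otimes> e \<in> D"
        using non_units_mult_in_derived_if_zero_symmetric True e(1) by auto
      then show ?thesis
        by (simp add: residue_derived)
    qed
    then show ?thesis
      using that e by blast
  next
    case False
    then obtain y0 where y0: "y0 \<in> carrier R" "\<zero> \<otimes> y0 \<noteq> \<zero>"
      by blast
    have "residue ((z \<oplus> x) \<otimes> (\<zero> \<otimes> y0)) = residue (x \<otimes> (\<zero> \<otimes> y0))" if "x \<in> carrier R" for x
      using absorbing_non_unit(3)[OF y0] that derived_closed[OF z] by simp
    then show ?thesis
      using that absorbing_non_unit(1,2)[OF y0] by blast
  qed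
  then show ?thesis
    using residue_add_derived_mult_of_generator[OF e z generator x y] by blast
qed

theorem derived_nr_ideal: "nr_ideal D R"
  unfolding nr_ideal_def
proof (intro conjI ballI)
  show "D \<lhd> add_monoid R"
    by (rule derived_normal)
  show "x \<otimes> z \<in> D" if "x \<in> carrier R" "z \<in> D" for x z
    using mult_derived_closed that .
  show "(z \<oplus> x) \<otimes> y \<oplus> \<ominus> (x \<otimes> y) \<in> D" if "x \<in> carrier R" "y \<in> carrier R" "z \<in> D" for x y z
    using residue_add_derived_mult[OF that(3,1,2)] that derived_closed[OF that(3)]
    by (simp add: residue_eq_iff a_minus_def)
qed

end

theorem lemma7:
  fixes R :: "('a, 'm) ring_scheme" and p :: nat
  assumes "Factorial_Ring.prime p" and "odd p"
    and "local_nearring R"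
    and "finite (carrier R)" and "card (carrier R) = p ^ 3"
    and "\<not> comm_group (add_monoid R)"
    and "\<forall>x\<in>carrier R. x [^]\<^bsub>add_monoid R\<^esub> p = \<zero>\<^bsub>R\<^esub>"
  shows "nr_ideal (derived (add_monoid R) (carrier R)) R"
proof -
  interpret nonabelian_p3_local_nearring R p
    using assms by unfold_locales auto
  show ?thesis
    by (rule derived_nr_ideal)
qed

end
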